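(* Every three-dimensional empirical copula is simplified.
   Context: $\mathbb{I}=[0,1]$, $\lambda$ Lebesgue measure; points of $\mathbb{I}^3$ are written $(\mathbf{u},v)$, $\mathbf{u}=(u_1,u_2)$. The (three-dimensional) empirical copula of a sample $(\mathbf{X}_1,Y_1),\dots,(\mathbf{X}_n,Y_n)$ of a random vector with continuous univariate marginals and without ties is the copula obtained by trilinear interpolation of the empirical subcopula; equivalently, there are permutations $\sigma_1,\sigma_2$ of $\{1,\dots,n\}$ such that its density is $\hat c_n(u_1,u_2,v)=n^2\sum_{i=1}^n\mathbf{1}_{I_i^1}(u_1)\mathbf{1}_{I_i^2}(u_2)\mathbf{1}_{V_i}(v)$ with $I_i^k=((\sigma_k(i)-1)/n,\sigma_k(i)/n]$ and $V_i=((i-1)/n,i/n]$. For a three-dimensional copula $C$, its Markov kernel $K_C$ is (a version of) the regular conditional distribution of $(U_1,U_2)$ given $U_3=v$, $(U_1,U_2,U_3)\sim C$, and $F_{1|3}(u_1|t)=K_C(t,[0,u_1]\times\mathbb{I})$, $F_{2|3}(u_2|t)=K_C(t,\mathbb{I}\times[0,u_2])$. $C$ is generalized simplified if there is a bivariate copula $A$ with $C(\mathbf{u},v)=\int_{[0,v]}A(F_{1|3}(u_1|t),F_{2|3}(u_2|t))\,d\lambda(t)$ for all $(\mathbf{u},v)$; $C$ is simplified if it is generalized simplified and, for $\lambda$-a.e. $t$, the functions $F_{1|3}(\cdot|t)$ and $F_{2|3}(\cdot|t)$ are continuous. *)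

theory Defs
  imports "HOL-Probability.Probability"
begin

definition copula2 :: "(real \<Rightarrow> real \<Rightarrow> real) \<Rightarrow> bool" where
  "copula2 A \<longleftrightarrow>
     (\<forall>u\<in>{0..1}. A u 0 = 0 \<and> A 0 u = 0 \<and> A u 1 = u \<and> A 1 u = u) \<and>
     (\<forall>u1\<in>{0..1}. \<forall>u2\<in>{0..1}. \<forall>v1\<in>{0..1}. \<forall>v2\<in>{0..1}.
        u1 \<le> u2 \<longrightarrow> v1 \<le> v2 \<longrightarrow> A u2 v2 - A u1 v2 - A u2 v1 + A u1 v1 \<ge> 0)"

text \<open>Density of the three-dimensional empirical copula given the rank permutations.\<close>
definition emp_density ::
  "nat \<Rightarrow> (nat \<Rightarrow> nat) \<Rightarrow> (nat \<Rightarrow> nat) \<Rightarrow> real \<Rightarrow> real \<Rightarrow> real \<Rightarrow> real" where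
  "emp_density n s1 s2 u1 u2 v =
     real n ^ 2 * (\<Sum>i\<in>{1..n}.
        indicator {(real (s1 i) - 1) / real n <.. real (s1 i) / real n} u1 *
        indicator {(real (s2 i) - 1) / real n <.. real (s2 i) / real n} u2 *
        indicator {(real i - 1) / real n <.. real i / real n} v)"

definition emp_copula ::
  "nat \<Rightarrow> (nat \<Rightarrow> nat) \<Rightarrow> (nat \<Rightarrow> nat) \<Rightarrow> real \<Rightarrow> real \<Rightarrow> real \<Rightarrow> real" where
  "emp_copula n s1 s2 u1 u2 v =
     set_lebesgue_integral lborel ({0..u1} \<times> {0..u2} \<times> {0..v})
       (\<lambda>x::real \<times> real \<times> real. emp_density n s1 s2 (fst x) (fst (snd x)) (snd (snd x)))"

text \<open>K is (a version of) the Markov kernel of the 3-copula C: a measurable family of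
  probability measures on the plane, regular conditional distribution of (U1,U2) given U3=t.\<close>
definition markov_kernel3 ::
  "(real \<Rightarrow> real \<Rightarrow> real \<Rightarrow> real) \<Rightarrow> (real \<Rightarrow> (real \<times> real) measure) \<Rightarrow> bool" where
  "markov_kernel3 C K \<longleftrightarrow>
     (\<forall>t. prob_space (K t) \<and> sets (K t) = sets (borel :: (real \<times> real) measure)) \<and>
     (\<forall>B\<in>sets (borel :: (real \<times> real) measure). (\<lambda>t. measure (K t) B) \<in> borel_measurable borel) \<and>
     (\<forall>u1\<in>{0..1}. \<forall>u2\<in>{0..1}. \<forall>v\<in>{0..1}.
        C u1 u2 v = set_lebesgue_integral lborel {0..v} (\<lambda>t. measure (K t) ({0..u1} \<times> {0..u2})))"

definition cond_df13 :: "(real \<Rightarrow> (real \<times> real) measure) \<Rightarrow> real \<Rightarrow> real \<Rightarrow> real" where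
  "cond_df13 K u1 t = measure (K t) ({0..u1} \<times> {0..1})"

definition cond_df23 :: "(real \<Rightarrow> (real \<times> real) measure) \<Rightarrow> real \<Rightarrow> real \<Rightarrow> real" where
  "cond_df23 K u2 t = measure (K t) ({0..1} \<times> {0..u2})"

definition gen_simplified_wrt ::
  "(real \<Rightarrow> real \<Rightarrow> real \<Rightarrow> real) \<Rightarrow> (real \<Rightarrow> (real \<times> real) measure) \<Rightarrow> bool" where
  "gen_simplified_wrt C K \<longleftrightarrow>
     (\<exists>A. copula2 A \<and>
        (\<forall>u1\<in>{0..1}. \<forall>u2\<in>{0..1}. \<forall>v\<in>{0..1}.
           C u1 u2 v = set_lebesgue_integral lborel {0..v}
                          (\<lambda>t. A (cond_df13 K u1 t) (cond_df23 K u2 t))))"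

definition simplified3 :: "(real \<Rightarrow> real \<Rightarrow> real \<Rightarrow> real) \<Rightarrow> bool" where
  "simplified3 C \<longleftrightarrow>
     (\<exists>K. markov_kernel3 C K \<and> gen_simplified_wrt C K \<and>
        (AE t in lborel. t \<in> {0..1} \<longrightarrow>
           continuous_on {0..1} (\<lambda>u. cond_df13 K u t) \<and>
           continuous_on {0..1} (\<lambda>u. cond_df23 K u t)))"

end

theory Submission
  imports Defs
begin

text \<open>Write \<open>I k = ((k-1)/n, k/n]\<close>. For \<open>t \<in> I j\<close> let \<open>K t\<close> be the uniform distribution on the
  square \<open>I (\<sigma>\<^sub>1 j) \<times> I (\<sigma>\<^sub>2 j)\<close>. Integrating the box probabilities of \<open>K\<close> over \<open>[0,v]\<close> gives back
  the empirical copula, so \<open>K\<close> is a Markov kernel of it. Under every \<open>K t\<close> the two coordinates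
  are independent, so the empirical copula is generalized simplified with the product copula, and
  the conditional distribution functions \<open>F\<^sub>1\<^sub>|\<^sub>3(\<cdot>|t)\<close>, \<open>F\<^sub>2\<^sub>|\<^sub>3(\<cdot>|t)\<close> are those of uniform
  distributions on intervals, hence continuous.\<close>

lemma emeasure_lborel_Times:
  fixes A :: "'a::euclidean_space set" and B :: "'b::euclidean_space set"
  assumes "A \<in> sets borel" "B \<in> sets borel"
  shows "emeasure lborel (A \<times> B) = emeasure lborel A * emeasure lborel B"
  using assms lborel.emeasure_pair_measure_Times[of A lborel B] by (simp add: lborel_prod)

lemma measure_lborel_Times:
  fixes A :: "'a::euclidean_space set" and B :: "'b::euclidean_space set"
  assumes "A \<in> sets borel" "B \<in> sets borel"
  shows "measure lborel (A \<times> B) = measure lborel A * measure lborel B"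
  using emeasure_lborel_Times[OF assms] by (simp add: measure_def enn2real_mult)

lemma measure_Icc_Int_greaterThanAtMost:
  fixes a b u :: real
  assumes "0 \<le> a"
  shows "measure lborel ({0..u} \<inter> {a<..b}) = max 0 (min u b - a)"
proof -
  have "{0..u} \<inter> {a<..b} = {a<..min u b}"
    using assms by auto
  then show ?thesis
    by (cases "a \<le> min u b") auto
qed

lemma set_integral_sum_indicator:
  fixes c :: "'i \<Rightarrow> real"
  assumes "finite I" "A \<in> sets M" "\<And>i. i \<in> I \<Longrightarrow> B i \<in> sets M"
    and "\<And>i. i \<in> I \<Longrightarrow> emeasure M (A \<inter> B i) < \<infinity>"
  shows "(LINT x:A|M. (\<Sum>i\<in>I. c i * indicator (B i) x)) = (\<Sum>i\<in>I. c i * measure M (A \<inter> B i))"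
proof -
  have "(LINT x:A|M. (\<Sum>i\<in>I. c i * indicator (B i) x)) = (LINT x|M. (\<Sum>i\<in>I. c i * indicator (A \<inter> B i) x))"
    unfolding set_lebesgue_integral_def
    by (intro Bochner_Integration.integral_cong refl)
      (simp add: sum_distrib_left indicator_inter_arith mult_ac)
  also have "\<dots> = (\<Sum>i\<in>I. (LINT x|M. c i * indicator (A \<inter> B i) x))"
    using assms by (intro Bochner_Integration.integral_sum integrable_mult_right integrable_real_indicator) auto
  also have "\<dots> = (\<Sum>i\<in>I. c i * measure M (A \<inter> B i))"
    using assms by (intro sum.cong) auto
  finally show ?thesis .
qed

definition cell :: "nat \<Rightarrow> nat \<Rightarrow> real set" where
  "cell n k = {(real k - 1) / real n <.. real k / real n}"

lemma cell_borel [measurable]: "cell n k \<in> sets borel"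
  unfolding cell_def by simp

lemma bounded_cell: "bounded (cell n k)"
  unfolding cell_def by simp

lemma emeasure_cell: "n \<ge> 1 \<Longrightarrow> emeasure lborel (cell n k) = 1 / real n"
  unfolding cell_def by (simp add: diff_divide_distrib)

lemma measure_Icc_Int_cell:
  "k \<ge> 1 \<Longrightarrow> measure lborel ({0..u} \<inter> cell n k) = max 0 (min u (real k / real n) - (real k - 1) / real n)"
  unfolding cell_def by (rule measure_Icc_Int_greaterThanAtMost) simp

lemma measure_Icc_Int_cell_1:
  "1 \<le> k \<Longrightarrow> k \<le> n \<Longrightarrow> measure lborel ({0..1} \<inter> cell n k) = 1 / real n"
  by (simp add: measure_Icc_Int_cell diff_divide_distrib divide_le_eq_1)

lemma continuous_on_measure_Icc_Int_cell:
  "k \<ge> 1 \<Longrightarrow> continuous_on S (\<lambda>u. measure lborel ({0..u} \<inter> cell n k))"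
  by (simp add: measure_Icc_Int_cell continuous_intros)

definition cell_index :: "nat \<Rightarrow> real \<Rightarrow> nat" where
  "cell_index n t = min n (max 1 (nat \<lceil>real n * t\<rceil>))"

lemma measurable_cell_index [measurable]: "cell_index n \<in> borel \<rightarrow>\<^sub>M count_space UNIV"
  unfolding cell_index_def[abs_def] by measurable

lemma cell_index_in_range: "n \<ge> 1 \<Longrightarrow> cell_index n t \<in> {1..n}"
  unfolding cell_index_def by auto

lemma cell_index_eqI:
  assumes "n \<ge> 1" "k \<in> {1..n}" "t \<in> cell n k"
  shows "cell_index n t = k"
proof -
  have "real k - 1 < real n * t" "real n * t \<le> real k"
    using assms by (auto simp: cell_def field_simps)
  then have "\<lceil>real n * t\<rceil> = int k"
    by (intro ceiling_unique) auto
  then show ?thesis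
    using assms unfolding cell_index_def by auto
qed

lemma mem_cell_cell_index:
  assumes "n \<ge> 1" "0 < t" "t \<le> 1"
  shows "t \<in> cell n (cell_index n t)"
proof -
  define k where "k = \<lceil>real n * t\<rceil>"
  have "1 \<le> k" "k \<le> int n"
    using assms by (auto simp: k_def ceiling_le_iff mult_left_le)
  then have "cell_index n t = nat k"
    unfolding cell_index_def k_def by linarith
  then have "real (cell_index n t) = of_int k"
    using \<open>1 \<le> k\<close> by simp
  moreover have "of_int k - 1 < real n * t" "real n * t \<le> of_int k"
    unfolding k_def by linarith+
  ultimately show ?thesis
    using assms by (auto simp: cell_def field_simps)
qed

lemma sum_indicator_cell:
  fixes f :: "nat \<Rightarrow> real"
  assumes "n \<ge> 1" "0 < t" "t \<le> 1"
  shows "(\<Sum>i\<in>{1..n}. f i * indicator (cell n i) t) = f (cell_index n t)"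
proof -
  have "indicator (cell n i) t = (if i = cell_index n t then 1 else 0 :: real)" if "i \<in> {1..n}" for i
  proof (cases "i = cell_index n t")
    case True
    then show ?thesis
      using mem_cell_cell_index[OF assms] by simp
  next
    case False
    then show ?thesis
      using cell_index_eqI[OF assms(1) that] by (auto simp: indicator_def)
  qed
  then have "(\<Sum>i\<in>{1..n}. f i * indicator (cell n i) t) = (\<Sum>i\<in>{1..n}. if i = cell_index n t then f i else 0)"
    by (intro sum.cong) auto
  then show ?thesis
    using cell_index_in_range[OF assms(1)] by simp
qed

lemma set_integral_cell_index:
  fixes f :: "nat \<Rightarrow> real"
  assumes "n \<ge> 1" "v \<le> 1"
  shows "(LINT t:{0..v}|lborel. f (cell_index n t)) = (\<Sum>i\<in>{1..n}. f i * measure lborel ({0..v} \<inter> cell n i))"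
proof -
  \<comment> \<open>The clamping in \<open>cell_index\<close> puts \<open>t = 0\<close> into the first cell although it lies in none.\<close>
  have "AE t\<in>{0..v} in lborel. f (cell_index n t) = (\<Sum>i\<in>{1..n}. f i * indicator (cell n i) t)"
    using AE_lborel_singleton[of 0] by eventually_elim (use assms sum_indicator_cell in auto)
  then have "(LINT t:{0..v}|lborel. f (cell_index n t)) = (LINT t:{0..v}|lborel. (\<Sum>i\<in>{1..n}. f i * indicator (cell n i) t))"
    by (rule set_lebesgue_integral_cong_AE[rotated 3]) measurable
  also have "\<dots> = (\<Sum>i\<in>{1..n}. f i * measure lborel ({0..v} \<inter> cell n i))"
    by (intro set_integral_sum_indicator emeasure_bounded_finite bounded_Int) (auto simp: bounded_cell)
  finally show ?thesis .
qed

lemma emeasure_cell_box: "n \<ge> 1 \<Longrightarrow> emeasure lborel (cell n k1 \<times> cell n k2) = 1 / real n ^ 2"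
  by (simp add: emeasure_lborel_Times emeasure_cell ennreal_mult'[symmetric] power2_eq_square)

lemma measure_uniform_cell_box:
  assumes "n \<ge> 1"
  shows "measure (uniform_measure lborel (cell n k1 \<times> cell n k2)) ({0..u1} \<times> {0..u2})
       = real n ^ 2 * measure lborel ({0..u1} \<inter> cell n k1) * measure lborel ({0..u2} \<inter> cell n k2)"
proof -
  note box = emeasure_cell_box[OF assms]
  have "measure (uniform_measure lborel (cell n k1 \<times> cell n k2)) ({0..u1} \<times> {0..u2})
      = measure lborel ((cell n k1 \<times> cell n k2) \<inter> ({0..u1} \<times> {0..u2})) / measure lborel (cell n k1 \<times> cell n k2)"
    using assms box by (intro measure_uniform_measure) (auto simp: borel_Times)
  also have "(cell n k1 \<times> cell n k2) \<inter> ({0..u1} \<times> {0..u2}) = ({0..u1} \<inter> cell n k1) \<times> ({0..u2} \<inter> cell n k2)"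
    by auto
  also have "measure lborel \<dots> = measure lborel ({0..u1} \<inter> cell n k1) * measure lborel ({0..u2} \<inter> cell n k2)"
    by (intro measure_lborel_Times) auto
  also have "measure lborel (cell n k1 \<times> cell n k2) = 1 / real n ^ 2"
    using box by (simp add: measure_def)
  finally show ?thesis
    by simp
qed

lemma emp_copula_eq_sum:
  "emp_copula n s1 s2 u1 u2 v = (\<Sum>i\<in>{1..n}. real n ^ 2 * measure lborel ({0..u1} \<inter> cell n (s1 i))
     * measure lborel ({0..u2} \<inter> cell n (s2 i)) * measure lborel ({0..v} \<inter> cell n i))"
proof -
  define Q where "Q i = cell n (s1 i) \<times> cell n (s2 i) \<times> cell n i" for i
  define R where "R = {0..u1} \<times> {0..u2} \<times> {0..v}"
  have R_Int_Q: "R \<inter> Q i = ({0..u1} \<inter> cell n (s1 i)) \<times> ({0..u2} \<inter> cell n (s2 i)) \<times> ({0..v} \<inter> cell n i)" for i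
    unfolding R_def Q_def by auto
  have measure_R_Int_Q: "measure lborel (R \<inter> Q i) = measure lborel ({0..u1} \<inter> cell n (s1 i))
     * (measure lborel ({0..u2} \<inter> cell n (s2 i)) * measure lborel ({0..v} \<inter> cell n i))" for i
    unfolding R_Int_Q by (simp add: measure_lborel_Times borel_Times)
  have density: "emp_density n s1 s2 a b c = (\<Sum>i\<in>{1..n}. real n ^ 2 * indicator (Q i) (a, b, c))" for a b c
    unfolding emp_density_def Q_def cell_def sum_distrib_left indicator_times fst_conv snd_conv
    by (intro sum.cong refl) (simp only: mult.assoc)
  have "emp_copula n s1 s2 u1 u2 v = (LINT x:R|lborel. (\<Sum>i\<in>{1..n}. real n ^ 2 * indicator (Q i) x))"
    unfolding emp_copula_def R_def[symmetric]
    by (intro set_lebesgue_integral_cong) (auto simp: R_def borel_Times density)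
  also have "\<dots> = (\<Sum>i\<in>{1..n}. real n ^ 2 * measure lborel (R \<inter> Q i))"
  proof (intro set_integral_sum_indicator emeasure_bounded_finite)
    show "bounded (R \<inter> Q i)" for i
      unfolding R_Int_Q by (intro bounded_Times bounded_Int) (auto simp: bounded_cell)
  qed (auto simp: R_def Q_def borel_Times)
  finally show ?thesis
    by (simp only: measure_R_Int_Q mult.assoc)
qed

definition emp_kernel :: "nat \<Rightarrow> (nat \<Rightarrow> nat) \<Rightarrow> (nat \<Rightarrow> nat) \<Rightarrow> real \<Rightarrow> (real \<times> real) measure" where
  "emp_kernel n s1 s2 t =
     uniform_measure lborel (cell n (s1 (cell_index n t)) \<times> cell n (s2 (cell_index n t)))"

lemma prob_space_emp_kernel: "n \<ge> 1 \<Longrightarrow> prob_space (emp_kernel n s1 s2 t)"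
  unfolding emp_kernel_def by (intro prob_space_uniform_measure) (simp_all add: emeasure_cell_box)

lemma measurable_emp_kernel: "(\<lambda>t. measure (emp_kernel n s1 s2 t) B) \<in> borel_measurable borel"
proof -
  have "(\<lambda>k. measure (uniform_measure lborel (cell n (s1 k) \<times> cell n (s2 k))) B) \<in> count_space UNIV \<rightarrow>\<^sub>M borel"
    by simp
  from measurable_compose[OF measurable_cell_index this] show ?thesis
    by (simp add: emp_kernel_def o_def)
qed

lemma measure_emp_kernel_box:
  "n \<ge> 1 \<Longrightarrow> measure (emp_kernel n s1 s2 t) ({0..u1} \<times> {0..u2}) = real n ^ 2
     * measure lborel ({0..u1} \<inter> cell n (s1 (cell_index n t)))
     * measure lborel ({0..u2} \<inter> cell n (s2 (cell_index n t)))"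
  unfolding emp_kernel_def by (rule measure_uniform_cell_box)

lemma emp_copula_eq_integral_emp_kernel:
  assumes "n \<ge> 1" "v \<le> 1"
  shows "emp_copula n s1 s2 u1 u2 v = (LINT t:{0..v}|lborel. measure (emp_kernel n s1 s2 t) ({0..u1} \<times> {0..u2}))"
proof -
  define f where "f k = real n ^ 2 * measure lborel ({0..u1} \<inter> cell n (s1 k))
    * measure lborel ({0..u2} \<inter> cell n (s2 k))" for k
  have "(LINT t:{0..v}|lborel. measure (emp_kernel n s1 s2 t) ({0..u1} \<times> {0..u2}))
      = (LINT t:{0..v}|lborel. f (cell_index n t))"
    using assms(1) by (simp add: measure_emp_kernel_box f_def)
  also have "\<dots> = (\<Sum>i\<in>{1..n}. f i * measure lborel ({0..v} \<inter> cell n i))"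
    using assms by (rule set_integral_cell_index)
  finally show ?thesis
    by (simp add: emp_copula_eq_sum f_def)
qed

lemma markov_kernel3_emp_kernel:
  "n \<ge> 1 \<Longrightarrow> markov_kernel3 (emp_copula n s1 s2) (emp_kernel n s1 s2)"
  unfolding markov_kernel3_def
  by (simp add: prob_space_emp_kernel measurable_emp_kernel emp_copula_eq_integral_emp_kernel)
    (simp add: emp_kernel_def)

lemma cond_df13_emp_kernel:
  assumes "n \<ge> 1" "s2 ` {1..n} \<subseteq> {1..n}"
  shows "cond_df13 (emp_kernel n s1 s2) u t = real n * measure lborel ({0..u} \<inter> cell n (s1 (cell_index n t)))"
proof -
  have "s2 (cell_index n t) \<in> {1..n}"
    using assms cell_index_in_range by blast
  then show ?thesis
    using assms(1) by (simp add: cond_df13_def measure_emp_kernel_box measure_Icc_Int_cell_1 power2_eq_square)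
qed

lemma cond_df23_emp_kernel:
  assumes "n \<ge> 1" "s1 ` {1..n} \<subseteq> {1..n}"
  shows "cond_df23 (emp_kernel n s1 s2) u t = real n * measure lborel ({0..u} \<inter> cell n (s2 (cell_index n t)))"
proof -
  have "s1 (cell_index n t) \<in> {1..n}"
    using assms cell_index_in_range by blast
  then show ?thesis
    using assms(1) by (simp add: cond_df23_def measure_emp_kernel_box measure_Icc_Int_cell_1 power2_eq_square)
qed

lemma copula2_product: "copula2 (\<lambda>x y. x * y)"
  unfolding copula2_def
proof (intro conjI ballI impI)
  fix u1 u2 v1 v2 :: real
  assume "u1 \<le> u2" "v1 \<le> v2"
  then have "0 \<le> (u2 - u1) * (v2 - v1)"
    by simp
  then show "0 \<le> u2 * v2 - u1 * v2 - u2 * v1 + u1 * v1"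
    by (simp add: algebra_simps)
qed auto

lemma gen_simplified_wrt_emp_kernel:
  assumes "n \<ge> 1" "s1 ` {1..n} \<subseteq> {1..n}" "s2 ` {1..n} \<subseteq> {1..n}"
  shows "gen_simplified_wrt (emp_copula n s1 s2) (emp_kernel n s1 s2)"
  unfolding gen_simplified_wrt_def
proof (intro exI[of _ "\<lambda>x y. x * y"] conjI copula2_product ballI)
  fix u1 u2 v :: real
  assume "v \<in> {0..1}"
  then show "emp_copula n s1 s2 u1 u2 v = (LINT t:{0..v}|lborel.
      cond_df13 (emp_kernel n s1 s2) u1 t * cond_df23 (emp_kernel n s1 s2) u2 t)"
    using assms by (simp add: emp_copula_eq_integral_emp_kernel measure_emp_kernel_box
        cond_df13_emp_kernel cond_df23_emp_kernel power2_eq_square mult_ac)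
qed

theorem theorem3p6:
  fixes n :: nat and s1 s2 :: "nat \<Rightarrow> nat"
  assumes "n \<ge> 1"
    and "bij_betw s1 {1..n} {1..n}"
    and "bij_betw s2 {1..n} {1..n}"
  shows "simplified3 (emp_copula n s1 s2)"
proof -
  have range: "s1 ` {1..n} \<subseteq> {1..n}" "s2 ` {1..n} \<subseteq> {1..n}"
    using assms(2,3) by (simp_all add: bij_betw_imp_surj_on)
  then have "s1 (cell_index n t) \<ge> 1" "s2 (cell_index n t) \<ge> 1" for t
    using cell_index_in_range[OF assms(1)] by force+
  then have "continuous_on {0..1} (\<lambda>u. cond_df13 (emp_kernel n s1 s2) u t)"
    "continuous_on {0..1} (\<lambda>u. cond_df23 (emp_kernel n s1 s2) u t)" for t
    using assms(1) range
    by (simp_all add: cond_df13_emp_kernel cond_df23_emp_kernel continuous_on_measure_Icc_Int_cell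
        continuous_on_mult_left)
  then show ?thesis
    unfolding simplified3_def using assms(1) range
    by (intro exI[of _ "emp_kernel n s1 s2"] conjI markov_kernel3_emp_kernel gen_simplified_wrt_emp_kernel) auto
qed

end
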